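(* Let $\alpha>0$ and $0<\beta\le\frac14$, and consider the model $Y_i=f(x_i)+V^{1/2}(x_i)\xi_i$, $i=0,\dots,n$, $x_i=i/n$, with $\xi_0,\dots,\xi_n\overset{iid}{\sim}N(0,1)$. For every $\eta\in(0,1)$ there exists $c_\eta>0$ not depending on $n$ such that for all $0<c<c_\eta$, $$\inf_\varphi\left\{\sup_{f\in\mathcal{H}_\alpha,\,V\in\mathcal{V}_0}P_{f,V}\{\varphi=1\}+\sup_{f\in\mathcal{H}_\alpha,\,V\in\mathcal{V}_{1,\beta}(cn^{-\beta})}P_{f,V}\{\varphi=0\}\right\}\ge1-\eta,$$ where the infimum is over all tests $\varphi$, i.e. measurable functions of $(Y_0,\dots,Y_n)$ into $\{0,1\}$.
   Context: $\mathcal{H}_\alpha=\mathcal{H}_\alpha(M)$: functions $g:[0,1]\to\mathbb{R}$ with $|g^{(\lfloor\alpha\rfloor)}(x)-g^{(\lfloor\alpha\rfloor)}(y)|\le M|x-y|^{\alpha-\lfloor\alpha\rfloor}$ for all $x,y\in[0,1]$ and $\|g^{(k)}\|_\infty\le M$ for $k=0,\dots,\lfloor\alpha\rfloor$; $M$ is a fixed sufficiently large constant. $\mathcal{V}_0=\{V:[0,1]\to[0,\infty):V\equiv\sigma^2,\ 0\le\sigma^2\le M\}$; $\mathcal{V}_{1,\beta}(\varepsilon)=\{V\in\mathcal{H}_\beta:V\ge0,\ \|V-\bar V\mathbf 1\|_2\ge\varepsilon\}$ with $\bar V=\int_0^1V$, $\mathbf1\equiv1$, $\|\cdot\|_2$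 the $L^2([0,1])$ norm. $P_{f,V}$ is the law of the data. *)

theory Defs
  imports "HOL-Probability.Probability"
begin

definition holder_class :: "real \<Rightarrow> real \<Rightarrow> (real \<Rightarrow> real) set" where
  "holder_class \<alpha> M = {g. \<exists>D :: nat \<Rightarrow> real \<Rightarrow> real.
     (\<forall>x\<in>{0..1}. D 0 x = g x) \<and>
     (\<forall>k. k < nat \<lfloor>\<alpha>\<rfloor> \<longrightarrow> (\<forall>x\<in>{0..1}. (D k has_real_derivative D (Suc k) x) (at x within {0..1}))) \<and>
     (\<forall>k. k \<le> nat \<lfloor>\<alpha>\<rfloor> \<longrightarrow> (\<forall>x\<in>{0..1}. \<bar>D k x\<bar> \<le> M)) \<and>
     (\<forall>x\<in>{0..1}. \<forall>y\<in>{0..1}.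
        \<bar>D (nat \<lfloor>\<alpha>\<rfloor>) x - D (nat \<lfloor>\<alpha>\<rfloor>) y\<bar> \<le> M * \<bar>x - y\<bar> powr (\<alpha> - of_int \<lfloor>\<alpha>\<rfloor>))}"

definition V0_class :: "real \<Rightarrow> (real \<Rightarrow> real) set" where
  "V0_class M = {V. \<exists>\<sigma>2. 0 \<le> \<sigma>2 \<and> \<sigma>2 \<le> M \<and> V = (\<lambda>_. \<sigma>2)}"

definition mean01 :: "(real \<Rightarrow> real) \<Rightarrow> real" where
  "mean01 V = integral {0..1} V"

definition L2dev01 :: "(real \<Rightarrow> real) \<Rightarrow> real" where
  "L2dev01 V = sqrt (integral {0..1} (\<lambda>x. (V x - mean01 V)\<^sup>2))"

definition V1_class :: "real \<Rightarrow> real \<Rightarrow> real \<Rightarrow> (real \<Rightarrow> real) set" where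
  "V1_class \<beta> M \<epsilon> = {V. V \<in> holder_class \<beta> M \<and> (\<forall>x\<in>{0..1}. 0 \<le> V x) \<and> L2dev01 V \<ge> \<epsilon>}"

definition sample_space :: "nat \<Rightarrow> (nat \<Rightarrow> real) measure" where
  "sample_space n = PiM {0..n} (\<lambda>_. borel)"

definition noise :: "nat \<Rightarrow> (nat \<Rightarrow> real) measure" where
  "noise n = PiM {0..n} (\<lambda>_. density lborel std_normal_density)"

definition law :: "nat \<Rightarrow> (real \<Rightarrow> real) \<Rightarrow> (real \<Rightarrow> real) \<Rightarrow> (nat \<Rightarrow> real) measure" where
  "law n f V = distr (noise n) (sample_space n)
     (\<lambda>\<xi>. \<lambda>i\<in>{0..n}. f (real i / real n) + sqrt (V (real i / real n)) * \<xi> i)"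

text \<open>Tests: measurable maps of the data into {0,1} (True = reject = 1).\<close>
definition tests :: "nat \<Rightarrow> ((nat \<Rightarrow> real) \<Rightarrow> bool) set" where
  "tests n = measurable (sample_space n) (count_space UNIV)"

definition test_risk :: "nat \<Rightarrow> real \<Rightarrow> real \<Rightarrow> real \<Rightarrow> real \<Rightarrow> ((nat \<Rightarrow> real) \<Rightarrow> bool) \<Rightarrow> real" where
  "test_risk n \<alpha> \<beta> M \<epsilon> \<phi> =
     (SUP fV \<in> holder_class \<alpha> M \<times> V0_class M.
        measure (law n (fst fV) (snd fV)) {y \<in> space (sample_space n). \<phi> y})
   + (SUP fV \<in> holder_class \<alpha> M \<times> V1_class \<beta> M \<epsilon>.
        measure (law n (fst fV) (snd fV)) {y \<in> space (sample_space n). \<not> \<phi> y})"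

end

(*
  The lower bound holds because the design points i/n cannot see
  oscillations of frequency n.  The variance function
      V(x) = 1 + a/2 (1 - cos (2 pi n x)),   a = n^(-beta),
  equals 1 at every design point, so the data generated by (0, V) and by (0, 1) have
  the same law, whence every test has type I plus type II error at least 1.  Yet V is
  a beta-Hoelder function with constant (2 pi)^beta, independent of n, and its L2
  distance from its mean is a / (2 sqrt 2), which exceeds c n^(-beta) once c < 1 / (2 sqrt 2).
*)
theory Submission
  imports Defs
begin

lemma abs_cos_diff_le: "\<bar>cos u - cos v\<bar> \<le> \<bar>u - v :: real\<bar>"
proof -
  have "\<bar>sin ((v - u) / 2)\<bar> = \<bar>sin ((u - v) / 2)\<bar>"
    by (metis abs_minus_cancel minus_diff_eq minus_divide_left sin_minus)
  then have "\<bar>cos u - cos v\<bar> = 2 * \<bar>sin ((u + v) / 2)\<bar> * \<bar>sin ((u - v) / 2)\<bar>"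
    by (simp add: cos_diff_cos abs_mult)
  also have "\<dots> \<le> 2 * 1 * \<bar>(u - v) / 2\<bar>"
    by (intro mult_mono abs_sin_x_le_abs_x) auto
  finally show ?thesis by simp
qed

lemma abs_cos_diff_le_powr:
  fixes u v b :: real
  assumes "0 < b" "b \<le> 1"
  shows "\<bar>cos u - cos v\<bar> \<le> 2 * \<bar>u - v\<bar> powr b"
proof (cases "\<bar>u - v\<bar> \<le> 1")
  case True
  then have "\<bar>u - v\<bar> powr 1 \<le> \<bar>u - v\<bar> powr b"
    using powr_mono'[of b 1 "\<bar>u - v\<bar>"] assms by simp
  then show ?thesis using abs_cos_diff_le[of u v] by simp
next
  case False
  then have "1 \<le> \<bar>u - v\<bar> powr b" using assms by (simp add: ge_one_powr_ge_zero)
  moreover have "\<bar>cos u - cos v\<bar> \<le> 2"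
    using abs_cos_le_one[of u] abs_cos_le_one[of v] by linarith
  ultimately show ?thesis by linarith
qed

lemma has_integral_cos_2pi_multiple:
  assumes "m \<ge> 1"
  shows "((\<lambda>x. cos (2 * pi * real m * x)) has_integral 0) {0..1}"
proof -
  define k where "k = 2 * pi * real m"
  have "k > 0" using assms by (simp add: k_def)
  then have "((\<lambda>x. sin (k * x) / k) has_vector_derivative cos (k * x)) (at x within {0..1})" for x
    by (auto intro!: derivative_eq_intros simp flip: has_real_derivative_iff_has_vector_derivative)
  then have "((\<lambda>x. cos (k * x)) has_integral (sin (k * 1) / k - sin (k * 0) / k)) {0..1}"
    by (intro fundamental_theorem_of_calculus) auto
  moreover have "sin (k * 1) = 0"
    using sin_npi[of "2 * m"] by (simp add: k_def mult.commute mult.left_commute)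
  ultimately show ?thesis by (simp add: k_def)
qed

lemma prob_space_law: "prob_space (law n f V)"
proof -
  have "prob_space (noise n)"
    unfolding noise_def by (auto intro!: prob_space_PiM prob_space_normal_density)
  moreover have "(\<lambda>\<xi>. \<lambda>i\<in>{0..n}. f (real i / real n) + sqrt (V (real i / real n)) * \<xi> i)
      \<in> measurable (noise n) (sample_space n)"
    unfolding noise_def sample_space_def by measurable
  ultimately show ?thesis
    unfolding law_def using prob_space.prob_space_distr by blast
qed

lemma law_cong_grid:
  assumes "\<And>i. i \<le> n \<Longrightarrow> V (real i / real n) = W (real i / real n)"
  shows "law n f V = law n f W"
  unfolding law_def using assms by (intro arg_cong[where f = "distr _ _"] ext restrict_ext) auto

lemma measure_law_le_SUP:
  assumes "(f, V) \<in> A"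
  shows "measure (law n f V) S \<le> (SUP fV \<in> A. measure (law n (fst fV) (snd fV)) S)"
proof (rule cSUP_upper2[of _ _ "(f, V)"])
  show "bdd_above ((\<lambda>fV. measure (law n (fst fV) (snd fV)) S) ` A)"
    by (rule bdd_aboveI[of _ 1]) (auto intro: prob_space.prob_le_1[OF prob_space_law])
qed (use assms in auto)

lemma INF_test_risk_ge_1_of_law_eq:
  assumes f: "f \<in> holder_class \<alpha> M" and V0: "V0 \<in> V0_class M" and V1: "V1 \<in> V1_class \<beta> M \<epsilon>"
    and indistinguishable: "law n f V1 = law n f V0"
  shows "1 \<le> (INF \<phi> \<in> tests n. test_risk n \<alpha> \<beta> M \<epsilon> \<phi>)"
proof (rule cINF_greatest)
  have "(\<lambda>_. True) \<in> tests n"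
    unfolding tests_def by (rule measurable_const) simp
  then show "tests n \<noteq> {}" by blast
next
  fix \<phi> assume \<phi>: "\<phi> \<in> tests n"
  define P where "P = law n f V0"
  interpret P: prob_space P unfolding P_def by (rule prob_space_law)
  have space_P: "space P = space (sample_space n)" "sets P = sets (sample_space n)"
    unfolding P_def law_def by simp_all
  let ?reject = "{y \<in> space (sample_space n). \<phi> y}"
  have "?reject = \<phi> -` {True} \<inter> space (sample_space n)" by auto
  also have "\<dots> \<in> P.events"
    using measurable_sets[OF \<phi>[unfolded tests_def]] space_P by simp
  moreover have "{y \<in> space (sample_space n). \<not> \<phi> y} = space P - ?reject"
    using space_P by auto
  ultimately have "measure P {y \<in> space (sample_space n). \<not> \<phi> y} = 1 - measure P ?reject"
    using P.prob_compl by simp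
  moreover have "measure P ?reject \<le> (SUP fV \<in> holder_class \<alpha> M \<times> V0_class M.
      measure (law n (fst fV) (snd fV)) ?reject)"
    unfolding P_def using f V0 by (intro measure_law_le_SUP) simp
  moreover have "measure P {y \<in> space (sample_space n). \<not> \<phi> y}
      \<le> (SUP fV \<in> holder_class \<alpha> M \<times> V1_class \<beta> M \<epsilon>.
           measure (law n (fst fV) (snd fV)) {y \<in> space (sample_space n). \<not> \<phi> y})"
    unfolding P_def indistinguishable[symmetric] using f V1 by (intro measure_law_le_SUP) simp
  ultimately show "1 \<le> test_risk n \<alpha> \<beta> M \<epsilon> \<phi>"
    unfolding test_risk_def by linarith
qed

lemma holder_classI_less_1:
  assumes "0 \<le> \<alpha>" "\<alpha> < 1"
    and "\<And>x. x \<in> {0..1} \<Longrightarrow> \<bar>g x\<bar> \<le> M"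
    and "\<And>x y. x \<in> {0..1} \<Longrightarrow> y \<in> {0..1} \<Longrightarrow> \<bar>g x - g y\<bar> \<le> M * \<bar>x - y\<bar> powr \<alpha>"
  shows "g \<in> holder_class \<alpha> M"
proof -
  have "\<lfloor>\<alpha>\<rfloor> = 0" using assms(1,2) by (simp add: floor_eq_iff)
  then show ?thesis
    unfolding holder_class_def using assms(3,4) by (intro CollectI exI[of _ "\<lambda>_. g"]) auto
qed

lemma zero_in_holder_class: "0 \<le> M \<Longrightarrow> (\<lambda>_. 0) \<in> holder_class \<alpha> M"
  unfolding holder_class_def by (intro CollectI exI[of _ "\<lambda>_ _. 0"]) auto

definition aliased_variance :: "nat \<Rightarrow> real \<Rightarrow> real \<Rightarrow> real" where
  "aliased_variance n a x = 1 + a / 2 * (1 - cos (2 * pi * real n * x))"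

lemma aliased_variance_grid:
  assumes "n \<ge> 1"
  shows "aliased_variance n a (real i / real n) = 1"
proof -
  have "2 * pi * real n * (real i / real n) = real (2 * i) * pi" using assms by simp
  then show ?thesis unfolding aliased_variance_def by (simp add: cos_npi_int)
qed

lemma aliased_variance_bounds:
  assumes "0 \<le> a"
  shows "1 \<le> aliased_variance n a x" "aliased_variance n a x \<le> 1 + a"
proof -
  have "0 \<le> 1 - cos (2 * pi * real n * x)" "1 - cos (2 * pi * real n * x) \<le> 2"
    using abs_cos_le_one[of "2 * pi * real n * x"] by linarith+
  then have "0 \<le> a / 2 * (1 - cos (2 * pi * real n * x))" "a / 2 * (1 - cos (2 * pi * real n * x)) \<le> a / 2 * 2"
    using assms by (simp_all add: mult_left_mono)
  then show "1 \<le> aliased_variance n a x" "aliased_variance n a x \<le> 1 + a"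
    unfolding aliased_variance_def by simp_all
qed

lemma aliased_variance_holder:
  assumes "0 \<le> a" "0 < b" "b \<le> 1"
  shows "\<bar>aliased_variance n a x - aliased_variance n a y\<bar>
    \<le> a * (2 * pi * real n) powr b * \<bar>x - y\<bar> powr b"
proof -
  define k where "k = 2 * pi * real n"
  have "aliased_variance n a x - aliased_variance n a y = a / 2 * (cos (k * y) - cos (k * x))"
    unfolding aliased_variance_def k_def by (simp add: algebra_simps)
  then have "\<bar>aliased_variance n a x - aliased_variance n a y\<bar> = \<bar>a / 2\<bar> * \<bar>cos (k * y) - cos (k * x)\<bar>"
    by (simp only: abs_mult)
  also have "\<dots> = a / 2 * \<bar>cos (k * x) - cos (k * y)\<bar>"
    using assms(1) by (simp add: abs_minus_commute)
  also have "\<dots> \<le> a / 2 * (2 * \<bar>k * x - k * y\<bar> powr b)"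
    using assms by (intro mult_left_mono abs_cos_diff_le_powr) auto
  also have "\<dots> = a * k powr b * \<bar>x - y\<bar> powr b"
    by (simp add: k_def abs_mult powr_mult flip: right_diff_distrib)
  finally show ?thesis by (simp add: k_def)
qed

lemma L2dev01_aliased_variance:
  assumes "n \<ge> 1" "0 \<le> a"
  shows "L2dev01 (aliased_variance n a) = a / (2 * sqrt 2)"
proof -
  let ?c = "\<lambda>m x. cos (2 * pi * real m * x)"
  have "aliased_variance n a = (\<lambda>x. (1 + a / 2) - a / 2 * ?c n x)"
    unfolding aliased_variance_def by (simp add: algebra_simps)
  moreover have "((\<lambda>x. (1 + a / 2) - a / 2 * ?c n x) has_integral (1 + a / 2) - a / 2 * 0) {0..1}"
    using has_integral_const_real[of "1 + a / 2" 0 1] assms(1)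
    by (intro has_integral_diff has_integral_mult_right has_integral_cos_2pi_multiple) auto
  ultimately have mean: "mean01 (aliased_variance n a) = 1 + a / 2"
    unfolding mean01_def by (simp add: integral_unique)
  have square: "(aliased_variance n a x - mean01 (aliased_variance n a))\<^sup>2 = a\<^sup>2 / 8 + a\<^sup>2 / 8 * ?c (2 * n) x"
    for x
  proof -
    have double: "?c (2 * n) x = 2 * (?c n x)\<^sup>2 - 1"
      using cos_double_cos[of "2 * pi * real n * x"] by (simp add: mult.commute mult.left_commute)
    have deviation: "aliased_variance n a x - mean01 (aliased_variance n a) = - (a / 2 * ?c n x)"
      unfolding mean aliased_variance_def by (simp add: algebra_simps)
    show ?thesis unfolding deviation double by (simp add: power2_eq_square algebra_simps)
  qed
  have "((\<lambda>x. a\<^sup>2 / 8 + a\<^sup>2 / 8 * ?c (2 * n) x) has_integral (a\<^sup>2 / 8 + a\<^sup>2 / 8 * 0)) {0..1}"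
    using has_integral_const_real[of "a\<^sup>2 / 8" 0 1] assms(1)
    by (intro has_integral_add has_integral_mult_right has_integral_cos_2pi_multiple) auto
  then have "L2dev01 (aliased_variance n a) = sqrt (a\<^sup>2 / 8)"
    unfolding L2dev01_def square by (simp add: integral_unique)
  also have "sqrt (8 :: real) = 2 * sqrt 2"
    using real_sqrt_mult[of 4 2] by simp
  then have "sqrt (a\<^sup>2 / 8) = a / (2 * sqrt 2)"
    using assms(2) by (simp add: real_sqrt_divide)
  finally show ?thesis .
qed

lemma aliased_variance_in_V1_class:
  assumes n: "n \<ge> 1" and \<beta>: "0 < \<beta>" "\<beta> < 1" and M: "2 * pi \<le> M"
    and c: "c \<le> 1 / (2 * sqrt 2)"
  shows "aliased_variance n (real n powr - \<beta>) \<in> V1_class \<beta> M (c * real n powr - \<beta>)"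
proof -
  define a where "a = real n powr - \<beta>"
  have "0 < a" "a \<le> 1"
    unfolding a_def using n \<beta> by (simp_all add: powr_minus_divide ge_one_powr_ge_zero)
  have "a * (2 * pi * real n) powr \<beta> = (2 * pi) powr \<beta>"
    unfolding a_def using n by (simp add: powr_mult powr_minus field_simps)
  also have "\<dots> \<le> (2 * pi) powr 1"
    using \<beta> pi_gt3 by (intro powr_mono) auto
  finally have "a * (2 * pi * real n) powr \<beta> \<le> M" using M by simp
  then have "\<bar>aliased_variance n a x - aliased_variance n a y\<bar> \<le> M * \<bar>x - y\<bar> powr \<beta>" for x y
    using aliased_variance_holder[of a \<beta> n x y] \<open>0 < a\<close> \<beta>
    by (smt (verit) mult_right_mono powr_ge_zero)
  moreover have "\<bar>aliased_variance n a x\<bar> \<le> M" for x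
    using aliased_variance_bounds[of a n x] \<open>0 < a\<close> \<open>a \<le> 1\<close> M pi_gt3 by (simp add: abs_le_iff)
  ultimately have "aliased_variance n a \<in> holder_class \<beta> M"
    using \<beta> by (intro holder_classI_less_1) auto
  moreover have "0 \<le> aliased_variance n a x" for x
    using aliased_variance_bounds(1)[of a n x] \<open>0 < a\<close> by simp
  moreover have "c * a \<le> a / (2 * sqrt 2)"
    using c \<open>0 < a\<close> by (simp add: field_simps)
  ultimately show ?thesis
    unfolding V1_class_def a_def[symmetric]
    using L2dev01_aliased_variance[of n a] n \<open>0 < a\<close> by auto
qed

theorem proposition3p3:
  fixes \<alpha> \<beta> :: real
  assumes "\<alpha> > 0" and "0 < \<beta>" and "\<beta> \<le> 1/4"
  shows "\<exists>M0. \<forall>M \<ge> M0. \<forall>\<eta>. 0 < \<eta> \<and> \<eta> < 1 \<longrightarrow>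
           (\<exists>c\<eta> > 0. \<forall>c. 0 < c \<and> c < c\<eta> \<longrightarrow>
              (\<forall>n::nat. n \<ge> 1 \<longrightarrow>
                 (INF \<phi> \<in> tests n. test_risk n \<alpha> \<beta> M (c * real n powr (- \<beta>)) \<phi>) \<ge> 1 - \<eta>))"
proof -
  have "1 \<le> (INF \<phi> \<in> tests n. test_risk n \<alpha> \<beta> M (c * real n powr (- \<beta>)) \<phi>)"
    if M: "M \<ge> 8" and c: "c < 1 / (2 * sqrt 2)" and n: "n \<ge> 1" for M c :: real and n :: nat
  proof (rule INF_test_risk_ge_1_of_law_eq)
    show "(\<lambda>_. 0) \<in> holder_class \<alpha> M" using M by (intro zero_in_holder_class) simp
    show "(\<lambda>_. 1) \<in> V0_class M" unfolding V0_class_def using M by (intro CollectI exI[of _ 1]) auto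
    show "aliased_variance n (real n powr - \<beta>) \<in> V1_class \<beta> M (c * real n powr - \<beta>)"
      using assms c n M pi_less_4 by (intro aliased_variance_in_V1_class) auto
    show "law n (\<lambda>_. 0) (aliased_variance n (real n powr - \<beta>)) = law n (\<lambda>_. 0) (\<lambda>_. 1)"
      using n by (intro law_cong_grid aliased_variance_grid)
  qed
  then show ?thesis
    by (intro exI[of _ 8] allI impI exI[of _ "1 / (2 * sqrt 2)"]) force+
qed

end
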